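(* Let $\mathcal{U}\subset\mathbb{C}^n$ be open with coordinates $z^\alpha$ ($\alpha=1,\dots,n$), and let $V=\begin{pmatrix}X^A\\ F_A\end{pmatrix}$ ($A=1,\dots,n$) be a holomorphic map $\mathcal{U}\to\mathbb{C}^{2n}$ such that $g_{\alpha\bar\beta}:=i\langle\partial_\alpha V,\overline{\partial_\beta V}\rangle$ is positive definite and $\langle\partial_\alpha V,\partial_\beta V\rangle=0$ for all $\alpha,\beta$. Then the matrix $e^A{}_\alpha=\partial_\alpha X^A$ is invertible, and locally there exists a holomorphic function $F(X)$ of $X^1,\dots,X^n$ such that $F_A=\partial F/\partial X^A$.
   Context: $\langle V,W\rangle=V^T\Omega W$ with $\Omega=\begin{pmatrix}0&\mathbb{1}\\-\mathbb{1}&0\end{pmatrix}$ ($n\times n$ blocks). *)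

theory Defs
  imports "HOL-Analysis.Analysis"
begin

definition holo_on :: "(complex^'n \<Rightarrow> complex) \<Rightarrow> (complex^'n) set \<Rightarrow> bool" where
  "holo_on f S \<longleftrightarrow>
     (\<forall>z\<in>S. \<exists>D. (f has_derivative D) (at z) \<and> (\<forall>c v. D (c *s v) = c * D v))"

definition pd :: "(complex^'n \<Rightarrow> complex) \<Rightarrow> 'n \<Rightarrow> complex^'n \<Rightarrow> complex" where
  "pd f a z = frechet_derivative f (at z) (axis a 1)"

text \<open>Symplectic pairing on C^{2n} = C^n x C^n, V = (X, F):
  <V,W> = V^T Omega W with Omega = ((0, 1), (-1, 0)).\<close>
definition symp :: "((complex^'n) \<times> (complex^'n)) \<Rightarrow> ((complex^'n) \<times> (complex^'n)) \<Rightarrow> complex" where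
  "symp V W = (\<Sum>A\<in>UNIV. fst V $ A * snd W $ A - snd V $ A * fst W $ A)"

definition dV :: "(complex^'n \<Rightarrow> complex^'n) \<Rightarrow> (complex^'n \<Rightarrow> complex^'n) \<Rightarrow> 'n \<Rightarrow> complex^'n
                   \<Rightarrow> (complex^'n) \<times> (complex^'n)" where
  "dV X F a z = ((\<chi> A. pd (\<lambda>w. X w $ A) a z), (\<chi> A. pd (\<lambda>w. F w $ A) a z))"

definition conjV :: "(complex^'n) \<times> (complex^'n) \<Rightarrow> (complex^'n) \<times> (complex^'n)" where
  "conjV V = ((\<chi> A. cnj (fst V $ A)), (\<chi> A. cnj (snd V $ A)))"

definition gmet :: "(complex^'n \<Rightarrow> complex^'n) \<Rightarrow> (complex^'n \<Rightarrow> complex^'n) \<Rightarrow> complex^'n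
                     \<Rightarrow> 'n \<Rightarrow> 'n \<Rightarrow> complex" where
  "gmet X F z a b = \<i> * symp (dV X F a z) (conjV (dV X F b z))"

definition pos_def_herm :: "('n::finite \<Rightarrow> 'n \<Rightarrow> complex) \<Rightarrow> bool" where
  "pos_def_herm g \<longleftrightarrow> (\<forall>\<xi>::complex^'n. \<xi> \<noteq> 0 \<longrightarrow>
      (let q = (\<Sum>a\<in>UNIV. \<Sum>b\<in>UNIV. \<xi> $ a * g a b * cnj (\<xi> $ b)) in Im q = 0 \<and> Re q > 0))"

end

theory Submission
  imports Defs "HOL-Complex_Analysis.Cauchy_Integral_Formula"
begin

(*
  Positivity of g forces e = (d_a X^A) to be invertible: with f = (d_a F_A), the quadratic form
  of g at xi is i * sum_A ((e xi)_A cnj (f xi)_A - (f xi)_A cnj (e xi)_A), which vanishes if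
  e xi = 0. By the holomorphic inverse function theorem X is then a local coordinate system, and
  in these coordinates the Jacobian of (F_A) is f e^-1. The isotropy <d_a V, d_b V> = 0 says
  exactly e^T f = f^T e, so f e^-1 is symmetric and F_A dX^A is a closed holomorphic 1-form. On a
  ball around c it has the primitive x |-> int_0^1 sum_A F_A(c + t (x - c)) (x - c)^A dt.
  The continuity of partial derivatives needed by the inverse function theorem and for
  differentiating under the integral sign comes from Cauchy's formula along coordinate lines.
*)

lemma norm_axis: "norm (axis k (c::'a::real_normed_vector)) = norm c"
  by (simp add: norm_vec_def L2_set_def axis_def if_distrib[of norm] if_distrib[of "\<lambda>x. x\<^sup>2"]
      cong: if_cong)

lemma bounded_linear_axis: "bounded_linear (axis k :: 'a::real_normed_vector \<Rightarrow> 'a^'n)"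
proof (rule bounded_linear_intro[where K=1])
  show "norm (axis k x) \<le> norm x * 1" for x :: 'a
    by (simp add: norm_axis)
qed (simp_all add: axis_def vec_eq_iff)

lemma matrix_vector_mult_scaleR_gen: "(M::'a::real_algebra_1^'n^'m) *v (r *\<^sub>R v) = r *\<^sub>R (M *v v)"
  by (simp add: vec_eq_iff matrix_vector_mult_def scaleR_sum_right)

lemma sum_matrix_vector_mult_transpose:
  fixes M :: "'a::comm_semiring_1^'n^'m"
  shows "(\<Sum>A\<in>UNIV. (M *v v) $ A * w $ A) = (\<Sum>B\<in>UNIV. v $ B * (transpose M *v w) $ B)"
proof -
  have "(\<Sum>A\<in>UNIV. (M *v v) $ A * w $ A) = (\<Sum>A\<in>UNIV. \<Sum>B\<in>UNIV. v $ B * (M $ A $ B * w $ A))"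
    by (simp add: matrix_vector_mult_def sum_distrib_left sum_distrib_right mult_ac)
  also have "\<dots> = (\<Sum>B\<in>UNIV. \<Sum>A\<in>UNIV. v $ B * (M $ A $ B * w $ A))"
    by (rule sum.swap)
  finally show ?thesis
    by (simp add: matrix_vector_mult_def transpose_def sum_distrib_left)
qed

lemma bounded_linear_sum_nth_mult:
  shows "bounded_linear (\<lambda>v::complex^'n. \<Sum>B\<in>UNIV. v $ B * w $ B)"
    and "bounded_linear (\<lambda>w::complex^'n. \<Sum>B\<in>UNIV. v $ B * w $ B)"
  by (intro bounded_linear_sum
      bounded_linear_compose[OF bounded_linear_mult_left bounded_linear_vec_nth]
      bounded_linear_compose[OF bounded_linear_mult_right bounded_linear_vec_nth])+

lemma continuous_on_Blinfun:
  fixes f :: "'a::topological_space \<Rightarrow> 'b::euclidean_space \<Rightarrow> 'c::euclidean_space"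
  assumes "\<And>s. bounded_linear (f s)" and "\<And>j. continuous_on S (\<lambda>s. f s j)"
  shows "continuous_on S (\<lambda>s. Blinfun (f s))"
  unfolding Blinfun_eq_matrix[OF assms(1)] by (intro continuous_intros assms(2))

lemma invertible_matrix_inv:
  fixes M :: "'a::semiring_1^'n^'m"
  assumes "invertible M"
  shows "M ** matrix_inv M = mat 1" and "matrix_inv M ** M = mat 1"
  using someI_ex[OF assms[unfolded invertible_def]] unfolding matrix_inv_def by auto

lemma symmetric_mult_matrix_inv:
  fixes M N :: "'a::field^'n^'n"
  assumes lagr: "transpose M ** N = transpose N ** M" and "invertible M"
  shows "transpose (N ** matrix_inv M) = N ** matrix_inv M"
proof -
  note inv = invertible_matrix_inv[OF \<open>invertible M\<close>]
  have "transpose N = transpose M ** N ** matrix_inv M"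
    by (metis lagr inv(1) matrix_mul_assoc matrix_mul_rid)
  then have "transpose (N ** matrix_inv M) = transpose (M ** matrix_inv M) ** N ** matrix_inv M"
    by (simp add: matrix_transpose_mul matrix_mul_assoc)
  then show ?thesis
    by (simp add: inv(1) transpose_mat)
qed

definition pd_matrix :: "(complex^'n \<Rightarrow> complex^'m) \<Rightarrow> complex^'n \<Rightarrow> complex^'n^'m" where
  "pd_matrix X z = (\<chi> A a. pd (\<lambda>w. X w $ A) a z)"

lemma pd_eq_derivative_axis:
  assumes "(f has_derivative D) (at z)"
  shows "pd f k z = D (axis k 1)"
  unfolding pd_def using frechet_derivative_at[OF assms] by simp

lemma holo_on_has_derivative:
  assumes "holo_on f U" "z \<in> U"
  shows "(f has_derivative (\<lambda>v. \<Sum>k\<in>UNIV. v $ k * pd f k z)) (at z)"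
proof -
  obtain D where D: "(f has_derivative D) (at z)" and hom: "\<And>c v. D (c *s v) = c * D v"
    using assms unfolding holo_on_def by blast
  have "D v = (\<Sum>k\<in>UNIV. v $ k * pd f k z)" for v
  proof -
    have "D v = D (\<Sum>k\<in>UNIV. v $ k *s axis k 1)" by (simp add: basis_expansion)
    also have "\<dots> = (\<Sum>k\<in>UNIV. D (v $ k *s axis k 1))"
      using linear_sum[OF has_derivative_linear[OF D]] by blast
    finally show ?thesis by (simp add: hom pd_eq_derivative_axis[OF D])
  qed
  then have "D = (\<lambda>v. \<Sum>k\<in>UNIV. v $ k * pd f k z)" by blast
  with D show ?thesis by simp
qed

lemma holo_on_if_has_derivative:
  assumes "\<And>z. z \<in> U \<Longrightarrow> (f has_derivative (\<lambda>v. \<Sum>k\<in>UNIV. v $ k * c z k)) (at z)"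
  shows "holo_on f U"
  unfolding holo_on_def
  using assms by (fastforce simp: sum_distrib_left mult_ac)

lemma pd_if_has_derivative:
  assumes "(f has_derivative (\<lambda>v. \<Sum>k\<in>UNIV. v $ k * c k)) (at z)"
  shows "pd f k z = c k"
  by (simp add: pd_eq_derivative_axis[OF assms] axis_def if_distrib[of "\<lambda>x. x * _"] cong: if_cong)

lemma holo_on_imp_continuous_on:
  assumes "holo_on f U"
  shows "continuous_on U f"
  using assms unfolding holo_on_def
  by (meson continuous_at_imp_continuous_on has_derivative_continuous)

lemma has_derivative_vecI:
  fixes f :: "'a::real_normed_vector \<Rightarrow> 'b::euclidean_space^'n"
  assumes "\<And>A. ((\<lambda>x. f x $ A) has_derivative (\<lambda>v. f' v $ A)) (at a within S)"
  shows "(f has_derivative f') (at a within S)"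
proof (rule has_derivative_componentwise_within[THEN iffD2], intro ballI)
  fix i :: "'b^'n" assume "i \<in> Basis"
  then obtain A b where i: "i = axis A b" "b \<in> Basis" unfolding Basis_vec_def by blast
  show "((\<lambda>x. f x \<bullet> i) has_derivative (\<lambda>x. f' x \<bullet> i)) (at a within S)"
    unfolding i inner_axis using has_derivative_inner_left[OF assms] .
qed

lemma has_derivative_pd_matrix:
  assumes "\<forall>A. holo_on (\<lambda>z. X z $ A) U" "z \<in> U"
  shows "(X has_derivative (\<lambda>v. pd_matrix X z *v v)) (at z)"
  using holo_on_has_derivative[OF assms(1)[rule_format] assms(2)]
  by (intro has_derivative_vecI) (simp add: pd_matrix_def matrix_vector_mult_def mult.commute)

lemma holo_on_pd_matrix_if_has_derivative:
  assumes "\<And>y. y \<in> V \<Longrightarrow> (Y has_derivative (\<lambda>v. M y *v v)) (at y)"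
  shows "\<forall>A. holo_on (\<lambda>y. Y y $ A) V" and "\<And>y. y \<in> V \<Longrightarrow> pd_matrix Y y = M y"
proof -
  have der: "((\<lambda>y. Y y $ A) has_derivative (\<lambda>v. \<Sum>k\<in>UNIV. v $ k * M y $ A $ k)) (at y)"
    if "y \<in> V" for A y
    using bounded_linear.has_derivative[OF bounded_linear_vec_nth assms[OF that], of A]
    by (simp add: matrix_vector_mult_def mult.commute)
  show "\<forall>A. holo_on (\<lambda>y. Y y $ A) V"
    using der by (blast intro: holo_on_if_has_derivative[where c="\<lambda>y k. M y $ _ $ k"])
  show "pd_matrix Y y = M y" if "y \<in> V" for y
    using pd_if_has_derivative[OF der[OF that]] by (simp add: pd_matrix_def vec_eq_iff)
qed

section \<open>Continuity of partial derivatives\<close>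

lemma continuous_on_circlepath_integral:
  fixes F :: "'a::topological_space \<Rightarrow> complex \<Rightarrow> complex"
  assumes "continuous_on (S \<times> sphere c \<bar>r\<bar>) (\<lambda>(w, u). F w u)"
  shows "continuous_on S (\<lambda>w. contour_integral (circlepath c r) (F w))"
proof -
  have "circlepath c r t \<in> sphere c \<bar>r\<bar>" if "t \<in> cbox 0 1" for t
    using path_image_circlepath[of c r] that by (auto simp: path_image_def cbox_interval)
  then have "continuous_on (S \<times> cbox 0 1) (\<lambda>p. (\<lambda>(w, u). F w u) (fst p, circlepath c r (snd p)))"
    by (intro continuous_on_compose2[OF assms]) (auto intro!: continuous_intros simp: circlepath)
  then have "continuous_on (S \<times> cbox 0 1)
      (\<lambda>(w, t). F w (circlepath c r t) * vector_derivative (circlepath c r) (at t))"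
    unfolding vector_derivative_circlepath split_beta by (intro continuous_intros) simp
  then show ?thesis
    unfolding contour_integral_integral cbox_interval[symmetric]
    by (rule integral_continuous_on_param)
qed

definition coord_line :: "complex^'n \<Rightarrow> 'n \<Rightarrow> complex \<Rightarrow> complex^'n" where
  "coord_line z k u = z + axis k (u - z $ k)"

lemma coord_line_self [simp]: "coord_line z k (z $ k) = z"
  by (simp add: coord_line_def)

lemma norm_coord_line_diff: "norm (coord_line z k u - z) = cmod (u - z $ k)"
  by (simp add: coord_line_def norm_axis)

lemma continuous_on_coord_line [continuous_intros]:
  assumes "continuous_on S g" "continuous_on S h"
  shows "continuous_on S (\<lambda>p. coord_line (g p) k (h p))"
  unfolding coord_line_def
  by (intro continuous_intros assms
      continuous_on_compose2[OF linear_continuous_on[OF bounded_linear_axis]]) auto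

lemma has_field_derivative_coord_line:
  assumes "holo_on f U" "coord_line z k u \<in> U"
  shows "((\<lambda>u. f (coord_line z k u)) has_field_derivative pd f k (coord_line z k u)) (at u)"
proof -
  have "((\<lambda>u. z + axis k (u - z $ k)) has_derivative (\<lambda>c. 0 + axis k (c - 0))) (at u)"
    by (intro has_derivative_add has_derivative_const has_derivative_diff has_derivative_ident
        bounded_linear.has_derivative[OF bounded_linear_axis])
  then have "(coord_line z k has_derivative axis k) (at u)"
    by (simp add: coord_line_def[abs_def])
  from has_derivative_compose[OF this holo_on_has_derivative[OF assms]]
  show ?thesis
    by (simp add: has_field_derivative_def o_def axis_def if_distrib[of "\<lambda>x. x * _"]
        mult_commute_abs
        cong: if_cong)
qed

lemma pd_eq_Cauchy_integral:
  assumes hol: "holo_on f U" and line: "\<And>u. cmod (u - c) \<le> r \<Longrightarrow> coord_line w k u \<in> U"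
    and w: "cmod (w $ k - c) < r"
  shows "pd f k w = 1 / (2 * of_real pi * \<i>) *
    contour_integral (circlepath c r) (\<lambda>u. f (coord_line w k u) / (u - w $ k)\<^sup>2)"
proof -
  have "continuous_on (cball c r) (\<lambda>u. f (coord_line w k u))"
    using line
    by (intro continuous_on_compose2[OF holo_on_imp_continuous_on[OF hol]] continuous_intros)
      (auto simp: dist_norm norm_minus_commute)
  moreover have "(\<lambda>u. f (coord_line w k u)) holomorphic_on ball c r"
    unfolding holomorphic_on_open[OF open_ball]
  proof
    fix x assume "x \<in> ball c r"
    then have "coord_line w k x \<in> U" by (intro line) (simp add: dist_norm norm_minus_commute)
    then show "\<exists>f'. ((\<lambda>u. f (coord_line w k u)) has_field_derivative f') (at x)"
      using has_field_derivative_coord_line[OF hol] by blast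
  qed
  moreover have "w $ k \<in> ball c r"
    using w by (simp add: dist_norm norm_minus_commute)
  moreover have "((\<lambda>u. f (coord_line w k u)) has_field_derivative pd f k w) (at (w $ k))"
    using has_field_derivative_coord_line[OF hol line, of "w $ k"] w by simp
  ultimately show ?thesis
    using Cauchy_derivative_integral_circlepath(2) DERIV_unique by blast
qed

lemma continuous_on_pd:
  assumes hol: "holo_on f U" and "open U"
  shows "continuous_on U (pd f k)"
proof (intro continuous_at_imp_continuous_on ballI)
  fix a assume "a \<in> U"
  then obtain R where "R > 0" and "ball a R \<subseteq> U"
    using \<open>open U\<close> open_contains_ball by blast
  define r where "r = R / 3"
  have "r > 0" and ball3: "ball a (3 * r) \<subseteq> U"
    using \<open>R > 0\<close> \<open>ball a R \<subseteq> U\<close> by (simp_all add: r_def)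
  have near: "cmod (w $ k - a $ k) < r" if "w \<in> ball a r" for w
    using Finite_Cartesian_Product.norm_nth_le[of "w - a" k] that
    by (simp add: dist_norm norm_minus_commute)
  have line: "coord_line w k u \<in> U" if "w \<in> ball a r" "cmod (u - a $ k) \<le> r" for w u
  proof -
    have "norm (coord_line w k u - a) \<le> cmod (u - w $ k) + norm (w - a)"
      using norm_triangle_ineq[of "coord_line w k u - w" "w - a"]
      by (simp add: norm_coord_line_diff)
    also have "\<dots> \<le> cmod (u - a $ k) + cmod (w $ k - a $ k) + norm (w - a)"
      using norm_triangle_ineq[of "u - a $ k" "a $ k - w $ k"] by (simp add: norm_minus_commute)
    finally show ?thesis
      using ball3 near[OF that(1)] that by (auto simp: dist_norm norm_minus_commute)
  qed
  have off_centre: "u \<noteq> w $ k" if "w \<in> ball a r" "u \<in> sphere (a $ k) r" for w u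
    using near[OF that(1)] that(2) by (auto simp: dist_norm norm_minus_commute)
  have "continuous_on (ball a r \<times> sphere (a $ k) \<bar>r\<bar>)
      (\<lambda>(w, u). f (coord_line w k u) / (u - w $ k)\<^sup>2)"
    unfolding split_beta using off_centre line \<open>r > 0\<close>
    by (intro continuous_intros continuous_on_compose2[OF holo_on_imp_continuous_on[OF hol]])
       (auto simp: mem_Times_iff dist_norm norm_minus_commute)
  from continuous_on_mult[OF continuous_on_const[of _ "1 / (2 * of_real pi * \<i>)"]
      continuous_on_circlepath_integral[OF this]]
  have "continuous_on (ball a r) (pd f k)"
    by (rule continuous_on_eq) (simp add: pd_eq_Cauchy_integral[OF hol line near])
  then show "isCont (pd f k) a"
    using \<open>r > 0\<close> continuous_on_interior by fastforce
qed

section \<open>The holomorphic Poincare lemma\<close>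

lemma convex_ray_mem:
  assumes "convex S" "c \<in> S" "x \<in> S" "t \<in> {0..1}"
  shows "c + t *\<^sub>R (x - c) \<in> S"
  using convexD_alt[OF assms(1,2,3), of t] assms(4) by (simp add: algebra_simps)

lemma has_derivative_radial_integrand:
  assumes hol: "\<forall>A. holo_on (\<lambda>y. G y $ A) S" and y: "c + t *\<^sub>R (x - c) \<in> S"
  defines "J \<equiv> pd_matrix G (c + t *\<^sub>R (x - c))"
  shows "((\<lambda>x. \<Sum>A\<in>UNIV. G (c + t *\<^sub>R (x - c)) $ A * (x - c) $ A) has_derivative
      (\<lambda>v. \<Sum>B\<in>UNIV. v $ B * (t *\<^sub>R (transpose J *v (x - c)) + G (c + t *\<^sub>R (x - c))) $ B)) (at x)"
proof -
  have "((\<lambda>x. c + t *\<^sub>R (x - c)) has_derivative (\<lambda>v. t *\<^sub>R v)) (at x)"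
    by (auto intro!: derivative_eq_intros)
  from has_derivative_compose[OF this has_derivative_pd_matrix[OF hol y]]
  have "((\<lambda>x. G (c + t *\<^sub>R (x - c))) has_derivative (\<lambda>v. J *v (t *\<^sub>R v))) (at x)"
    by (simp add: o_def J_def)
  then have "((\<lambda>x. \<Sum>A\<in>UNIV. G (c + t *\<^sub>R (x - c)) $ A * (x - c) $ A) has_derivative
      (\<lambda>v. \<Sum>A\<in>UNIV. G (c + t *\<^sub>R (x - c)) $ A * (v - 0) $ A
        + (J *v (t *\<^sub>R v)) $ A * (x - c) $ A)) (at x)"
    by (intro has_derivative_sum has_derivative_mult has_derivative_diff has_derivative_ident
        has_derivative_const bounded_linear.has_derivative[OF bounded_linear_vec_nth])
  moreover have "(\<Sum>A\<in>UNIV. G (c + t *\<^sub>R (x - c)) $ A * (v - 0) $ A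
        + (J *v (t *\<^sub>R v)) $ A * (x - c) $ A)
      = (\<Sum>B\<in>UNIV. v $ B * (t *\<^sub>R (transpose J *v (x - c)) + G (c + t *\<^sub>R (x - c))) $ B)" for v
    unfolding sum.distrib sum_matrix_vector_mult_transpose
    by (simp add: sum.distrib[symmetric] mult_scaleR_left mult_scaleR_right algebra_simps)
  ultimately show ?thesis
    by simp
qed

lemma has_vector_derivative_radial:
  assumes hol: "\<forall>A. holo_on (\<lambda>y. G y $ A) S" and y: "c + t *\<^sub>R (x - c) \<in> S"
  defines "J \<equiv> pd_matrix G (c + t *\<^sub>R (x - c))"
  shows "((\<lambda>t. t *\<^sub>R G (c + t *\<^sub>R (x - c))) has_vector_derivative
      (t *\<^sub>R (J *v (x - c)) + G (c + t *\<^sub>R (x - c)))) (at t within T)"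
proof -
  have "((\<lambda>t. c + t *\<^sub>R (x - c)) has_derivative (\<lambda>s. s *\<^sub>R (x - c))) (at t within T)"
    by (auto intro!: derivative_eq_intros)
  from has_derivative_compose[OF this
      has_derivative_at_withinI[OF has_derivative_pd_matrix[OF hol y]]]
  have "((\<lambda>t. G (c + t *\<^sub>R (x - c))) has_derivative (\<lambda>s. J *v (s *\<^sub>R (x - c)))) (at t within T)"
    by (simp add: o_def J_def)
  from has_derivative_scaleR[OF has_derivative_ident this]
  show ?thesis
    by (simp add: has_vector_derivative_def matrix_vector_mult_scaleR_gen algebra_simps)
qed

lemma has_integral_radial:
  assumes hol: "\<forall>A. holo_on (\<lambda>y. G y $ A) S" and "convex S" "c \<in> S" "x \<in> S"
  shows "((\<lambda>t. t *\<^sub>R (pd_matrix G (c + t *\<^sub>R (x - c)) *v (x - c)) + G (c + t *\<^sub>R (x - c)))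
      has_integral G x) {0..1}"
proof -
  have "((\<lambda>t. t *\<^sub>R G (c + t *\<^sub>R (x - c))) has_vector_derivative
      (t *\<^sub>R (pd_matrix G (c + t *\<^sub>R (x - c)) *v (x - c)) + G (c + t *\<^sub>R (x - c))))
      (at t within {0..1})"
    if "t \<in> {0..1}" for t
    using has_vector_derivative_radial[OF hol convex_ray_mem[OF assms(2-4) that]] .
  from fundamental_theorem_of_calculus[OF _ this] show ?thesis
    by simp
qed

lemma continuous_on_radial_derivative:
  fixes G :: "complex^'n \<Rightarrow> complex^'n"
  assumes "open S" "convex S" "c \<in> S" and hol: "\<forall>A. holo_on (\<lambda>y. G y $ A) S"
  shows "continuous_on (S \<times> cbox 0 1) (\<lambda>(x, t).
    t *\<^sub>R (pd_matrix G (c + t *\<^sub>R (x - c)) *v (x - c)) + G (c + t *\<^sub>R (x - c)))"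
proof -
  have cont_ray: "continuous_on (S \<times> cbox 0 1) (\<lambda>p. h (c + snd p *\<^sub>R (fst p - c)))"
    if "continuous_on S h" for h :: "complex^'n \<Rightarrow> complex"
    by (rule continuous_on_compose2[OF that])
      (auto intro!: continuous_intros convex_ray_mem[OF assms(2,3)] simp: cbox_interval)
  have "continuous_on (S \<times> cbox 0 1) (\<lambda>p. \<chi> B.
      (snd p *\<^sub>R (pd_matrix G (c + snd p *\<^sub>R (fst p - c)) *v (fst p - c))
        + G (c + snd p *\<^sub>R (fst p - c))) $ B)"
    unfolding pd_matrix_def matrix_vector_mult_def vector_add_component vector_scaleR_component
      vec_lambda_beta
    by (intro continuous_intros cont_ray continuous_on_pd hol[rule_format] \<open>open S\<close>
        holo_on_imp_continuous_on)
  then show ?thesis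
    by (simp only: vec_lambda_eta case_prod_unfold)
qed

lemma leibniz_rule_lincomb:
  fixes f :: "complex^'n \<Rightarrow> real \<Rightarrow> complex" and h :: "complex^'n \<Rightarrow> real \<Rightarrow> complex^'n"
  assumes "open S" "convex S" "x \<in> S"
    and der: "\<And>x t. x \<in> S \<Longrightarrow> t \<in> cbox a b \<Longrightarrow>
      ((\<lambda>x. f x t) has_derivative (\<lambda>v. \<Sum>B\<in>UNIV. v $ B * h x t $ B)) (at x)"
    and int: "\<And>x. x \<in> S \<Longrightarrow> f x integrable_on cbox a b"
    and cont: "continuous_on (S \<times> cbox a b) (\<lambda>(x, t). h x t)"
  shows "((\<lambda>x. integral (cbox a b) (f x)) has_derivative
    (\<lambda>v. \<Sum>B\<in>UNIV. v $ B * integral (cbox a b) (h x) $ B)) (at x)"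
proof -
  define D where "D x t = Blinfun (\<lambda>v. \<Sum>B\<in>UNIV. v $ B * h x t $ B)" for x t
  have D_apply: "blinfun_apply (D x t) = (\<lambda>v. \<Sum>B\<in>UNIV. v $ B * h x t $ B)" for x t
    unfolding D_def by (rule bounded_linear_Blinfun_apply[OF bounded_linear_sum_nth_mult(1)])
  have cont_D: "continuous_on (S \<times> cbox a b) (\<lambda>(x, t). D x t)"
    using cont unfolding D_def split_beta
    by (intro continuous_on_Blinfun bounded_linear_sum_nth_mult continuous_intros)
  have int_D: "D x integrable_on cbox a b"
    by (intro integrable_continuous
        continuous_on_compose2[OF cont_D, of _ "\<lambda>t. (x, t)", simplified])
      (auto intro!: continuous_intros simp: \<open>x \<in> S\<close>)
  have int_h: "h x integrable_on cbox a b"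
    by (intro integrable_continuous
        continuous_on_compose2[OF cont, of _ "\<lambda>t. (x, t)", simplified])
      (auto intro!: continuous_intros simp: \<open>x \<in> S\<close>)
  have "blinfun_apply (integral (cbox a b) (D x))
      = (\<lambda>v. \<Sum>B\<in>UNIV. v $ B * integral (cbox a b) (h x) $ B)"
  proof
    fix v
    show "blinfun_apply (integral (cbox a b) (D x)) v
        = (\<Sum>B\<in>UNIV. v $ B * integral (cbox a b) (h x) $ B)"
      using blinfun_apply_integral[OF int_D]
        integral_linear[OF int_h bounded_linear_sum_nth_mult(2)]
      by (simp add: D_apply o_def)
  qed
  moreover have "((\<lambda>x. integral (cbox a b) (f x))
      has_derivative blinfun_apply (integral (cbox a b) (D x))) (at x within S)"
    using der by (intro leibniz_rule int cont_D assms(2,3))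
      (simp add: D_apply has_derivative_at_withinI)
  ultimately show ?thesis
    using at_within_open[OF \<open>x \<in> S\<close> \<open>open S\<close>] by simp
qed

lemma has_derivative_radial_integral:
  fixes G :: "complex^'n \<Rightarrow> complex^'n"
  assumes "open S" "convex S" "c \<in> S" "x \<in> S" and hol: "\<forall>A. holo_on (\<lambda>y. G y $ A) S"
    and sym: "\<And>y. y \<in> S \<Longrightarrow> transpose (pd_matrix G y) = pd_matrix G y"
  shows "((\<lambda>x. integral (cbox 0 1) (\<lambda>t. \<Sum>A\<in>UNIV. G (c + t *\<^sub>R (x - c)) $ A * (x - c) $ A))
    has_derivative (\<lambda>v. \<Sum>B\<in>UNIV. v $ B * G x $ B)) (at x)"
proof -
  note ray = convex_ray_mem[OF \<open>convex S\<close> \<open>c \<in> S\<close>]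
  define h where
    "h x t = t *\<^sub>R (pd_matrix G (c + t *\<^sub>R (x - c)) *v (x - c)) + G (c + t *\<^sub>R (x - c))"
    for x and t :: real
  (* by the symmetry of the Jacobian, the x-derivative of the integrand is the t-derivative
     of t G(c + t (x - c)) *)
  have der: "((\<lambda>x. \<Sum>A\<in>UNIV. G (c + t *\<^sub>R (x - c)) $ A * (x - c) $ A) has_derivative
      (\<lambda>v. \<Sum>B\<in>UNIV. v $ B * h x t $ B)) (at x)" if "x \<in> S" "t \<in> cbox 0 1" for x t
    using has_derivative_radial_integrand[OF hol ray[OF that[unfolded cbox_interval]]]
    by (simp add: h_def sym[OF ray[OF that[unfolded cbox_interval]]])
  have int: "(\<lambda>t. \<Sum>A\<in>UNIV. G (c + t *\<^sub>R (x - c)) $ A * (x - c) $ A) integrable_on cbox 0 1"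
    if "x \<in> S" for x
    by (intro integrable_continuous continuous_intros
        continuous_on_compose2[OF holo_on_imp_continuous_on[OF hol[rule_format]]])
      (auto intro: ray that simp: cbox_interval)
  have cont: "continuous_on (S \<times> cbox 0 1) (\<lambda>(x, t). h x t)"
    using continuous_on_radial_derivative[OF assms(1-3) hol] by (simp add: h_def)
  have "integral (cbox 0 1) (h x) = G x"
    using has_integral_radial[OF hol \<open>convex S\<close> \<open>c \<in> S\<close> \<open>x \<in> S\<close>]
    by (simp add: h_def[abs_def] cbox_interval integral_unique)
  with leibniz_rule_lincomb[OF assms(1,2,4) der int cont] show ?thesis
    by simp
qed

lemma exists_holo_potential_convex:
  fixes G :: "complex^'n \<Rightarrow> complex^'n"
  assumes "open S" "convex S" and hol: "\<forall>A. holo_on (\<lambda>y. G y $ A) S"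
    and sym: "\<And>y. y \<in> S \<Longrightarrow> transpose (pd_matrix G y) = pd_matrix G y"
  shows "\<exists>\<Phi>. holo_on \<Phi> S \<and> (\<forall>x\<in>S. \<forall>A. pd \<Phi> A x = G x $ A)"
proof (cases "S = {}")
  case False
  then obtain c where "c \<in> S" by blast
  define \<Phi> where
    "\<Phi> x = integral (cbox 0 1) (\<lambda>t. \<Sum>A\<in>UNIV. G (c + t *\<^sub>R (x - c)) $ A * (x - c) $ A)" for x
  have der: "(\<Phi> has_derivative (\<lambda>v. \<Sum>B\<in>UNIV. v $ B * G x $ B)) (at x)" if "x \<in> S" for x
    unfolding \<Phi>_def[abs_def]
    by (rule has_derivative_radial_integral[OF assms(1,2) \<open>c \<in> S\<close> that hol sym])
  then have "holo_on \<Phi> S"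
    by (rule holo_on_if_has_derivative)
  moreover have "\<forall>x\<in>S. \<forall>A. pd \<Phi> A x = G x $ A"
    using pd_if_has_derivative[OF der] by blast
  ultimately show ?thesis
    by blast
qed (auto simp: holo_on_def)

section \<open>Holomorphic inverse function theorem\<close>

lemma holo_inverse_function_theorem:
  fixes X :: "complex^'n \<Rightarrow> complex^'n"
  assumes "open U" and hol: "\<forall>A. holo_on (\<lambda>z. X z $ A) U" and "z0 \<in> U"
    and "invertible (pd_matrix X z0)"
  obtains U' V g where "open U'" "U' \<subseteq> U" "z0 \<in> U'" "open V" "X z0 \<in> V" "homeomorphism U' V X g"
    "\<And>y. y \<in> V \<Longrightarrow> (g has_derivative (\<lambda>v. matrix_inv (pd_matrix X (g y)) *v v)) (at y)"
proof -
  let ?L = "\<lambda>M :: complex^'n^'n. Blinfun ((*v) M)"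
  have L_apply: "blinfun_apply (?L M) = (*v) M" for M
    by (simp add: bounded_linear_Blinfun_apply)
  have der: "(X has_derivative blinfun_apply (?L (pd_matrix X z))) (at z)" if "z \<in> U" for z
    unfolding L_apply using has_derivative_pd_matrix[OF hol that] by (simp add: eta_contract_eq)
  have "continuous_on U (\<lambda>z. pd_matrix X z *v j)" for j
    unfolding pd_matrix_def matrix_vector_mult_def
    by (intro continuous_intros continuous_on_pd hol[rule_format] \<open>open U\<close>)
  then have cont: "continuous_on U (\<lambda>z. ?L (pd_matrix X z))"
    by (intro continuous_on_Blinfun matrix_vector_mul_bounded_linear)
  have "?L (matrix_inv (pd_matrix X z0)) o\<^sub>L ?L (pd_matrix X z0) = id_blinfun"
    by (rule blinfun_eqI)
      (simp add: L_apply matrix_vector_mul_assoc invertible_matrix_inv(2)[OF \<open>invertible _\<close>])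
  from inverse_function_theorem[OF \<open>open U\<close> der cont \<open>z0 \<in> U\<close> this]
  obtain U' V g g' where "open U'" "U' \<subseteq> U" "z0 \<in> U'" "open V" "X z0 \<in> V" "homeomorphism U' V X g"
    and der_g: "\<And>y. y \<in> V \<Longrightarrow> (g has_derivative g' y) (at y)"
    and g': "\<And>y. y \<in> V \<Longrightarrow> g' y = inv ((*v) (pd_matrix X (g y)))"
    and bij: "\<And>y. y \<in> V \<Longrightarrow> bij ((*v) (pd_matrix X (g y)))"
    unfolding L_apply by blast
  have "g' y = (*v) (matrix_inv (pd_matrix X (g y)))" if "y \<in> V" for y
  proof -
    note inv = invertible_matrix_inv[OF bij[OF that, folded invertible_eq_bij]]
    show ?thesis
      unfolding g'[OF that]
      by (rule inv_unique_comp) (simp_all add: fun_eq_iff matrix_vector_mul_assoc inv)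
  qed
  with der_g show ?thesis
    using that \<open>open U'\<close> \<open>U' \<subseteq> U\<close> \<open>z0 \<in> U'\<close> \<open>open V\<close> \<open>X z0 \<in> V\<close> \<open>homeomorphism U' V X g\<close>
    by (simp add: eta_contract_eq)
qed

section \<open>Prepotentials\<close>

lemma sum_sesquilinear_matrix:
  fixes P Q :: "complex^'n^'m"
  shows "(\<Sum>a\<in>UNIV. \<Sum>b\<in>UNIV. \<xi> $ a * (\<Sum>A\<in>UNIV. P $ A $ a * cnj (Q $ A $ b)) * cnj (\<xi> $ b))
    = (\<Sum>A\<in>UNIV. (P *v \<xi>) $ A * cnj ((Q *v \<xi>) $ A))"
proof -
  have "(\<Sum>A\<in>UNIV. (P *v \<xi>) $ A * cnj ((Q *v \<xi>) $ A))
      = (\<Sum>A\<in>UNIV. \<Sum>a\<in>UNIV. \<Sum>b\<in>UNIV. \<xi> $ a * (P $ A $ a * cnj (Q $ A $ b)) * cnj (\<xi> $ b))"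
    by (simp add: matrix_vector_mult_def sum_product cnj_sum mult_ac)
  also have "\<dots> = (\<Sum>a\<in>UNIV. \<Sum>A\<in>UNIV. \<Sum>b\<in>UNIV. \<xi> $ a * (P $ A $ a * cnj (Q $ A $ b)) * cnj (\<xi> $ b))"
    by (rule sum.swap)
  also have "\<dots> = (\<Sum>a\<in>UNIV. \<Sum>b\<in>UNIV. \<Sum>A\<in>UNIV. \<xi> $ a * (P $ A $ a * cnj (Q $ A $ b)) * cnj (\<xi> $ b))"
    by (rule sum.cong[OF refl], rule sum.swap)
  finally show ?thesis
    by (simp add: sum_distrib_left sum_distrib_right)
qed

lemma gmet_quadratic_form:
  fixes X F :: "complex^'n \<Rightarrow> complex^'n" and z \<xi> :: "complex^'n"
  defines "M \<equiv> pd_matrix X z" and "N \<equiv> pd_matrix F z"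
  shows "(\<Sum>a\<in>UNIV. \<Sum>b\<in>UNIV. \<xi> $ a * gmet X F z a b * cnj (\<xi> $ b))
    = \<i> * (\<Sum>A\<in>UNIV. (M *v \<xi>) $ A * cnj ((N *v \<xi>) $ A) - (N *v \<xi>) $ A * cnj ((M *v \<xi>) $ A))"
proof -
  define h where "h P Q a b = (\<Sum>A\<in>UNIV. P $ A $ a * cnj (Q $ A $ b))"
    for P Q :: "complex^'n^'n" and a b
  have g: "gmet X F z a b = \<i> * (h M N a b - h N M a b)" for a b
    by (simp add: gmet_def symp_def dV_def conjV_def M_def N_def h_def pd_matrix_def sum_subtractf)
  have "(\<Sum>a\<in>UNIV. \<Sum>b\<in>UNIV. \<xi> $ a * gmet X F z a b * cnj (\<xi> $ b))
      = \<i> * ((\<Sum>a\<in>UNIV. \<Sum>b\<in>UNIV. \<xi> $ a * h M N a b * cnj (\<xi> $ b))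
            - (\<Sum>a\<in>UNIV. \<Sum>b\<in>UNIV. \<xi> $ a * h N M a b * cnj (\<xi> $ b)))"
    unfolding g by (simp add: sum_distrib_left sum_subtractf[symmetric] algebra_simps)
  then show ?thesis
    unfolding h_def sum_sesquilinear_matrix by (simp add: sum_subtractf)
qed

lemma invertible_pd_matrix_if_pos_def:
  assumes "pos_def_herm (gmet X F z)"
  shows "invertible (pd_matrix X z)"
proof (rule ccontr)
  assume "\<not> invertible (pd_matrix X z)"
  then obtain \<xi> where "pd_matrix X z *v \<xi> = 0" "\<xi> \<noteq> 0"
    by (metis invertible_left_inverse matrix_left_invertible_ker)
  then have "(\<Sum>a\<in>UNIV. \<Sum>b\<in>UNIV. \<xi> $ a * gmet X F z a b * cnj (\<xi> $ b)) = 0"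
    by (simp add: gmet_quadratic_form)
  with assms \<open>\<xi> \<noteq> 0\<close> show False
    unfolding pos_def_herm_def Let_def by fastforce
qed

lemma symp_dV_eq:
  "symp (dV X F a z) (dV X F b z)
    = (transpose (pd_matrix X z) ** pd_matrix F z
        - transpose (pd_matrix F z) ** pd_matrix X z) $ a $ b"
  by (simp add: symp_def dV_def pd_matrix_def matrix_matrix_mult_def transpose_def sum_subtractf)

lemma symmetric_pd_matrix_comp_inverse:
  fixes X F g :: "complex^'n \<Rightarrow> complex^'n"
  assumes holF: "\<forall>A. holo_on (\<lambda>z. F z $ A) U"
    and inv: "\<And>z. z \<in> U \<Longrightarrow> invertible (pd_matrix X z)"
    and lagr: "\<And>z. z \<in> U \<Longrightarrow>
      transpose (pd_matrix X z) ** pd_matrix F z = transpose (pd_matrix F z) ** pd_matrix X z"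
    and gU: "\<And>y. y \<in> V \<Longrightarrow> g y \<in> U"
    and der_g: "\<And>y. y \<in> V \<Longrightarrow> (g has_derivative (\<lambda>v. matrix_inv (pd_matrix X (g y)) *v v)) (at y)"
  shows "\<forall>A. holo_on (\<lambda>y. (F \<circ> g) y $ A) V"
    and "\<And>y. y \<in> V \<Longrightarrow> transpose (pd_matrix (F \<circ> g) y) = pd_matrix (F \<circ> g) y"
proof -
  define H where "H y = pd_matrix F (g y) ** matrix_inv (pd_matrix X (g y))" for y
  have der_Fg: "((F \<circ> g) has_derivative (\<lambda>v. H y *v v)) (at y)" if "y \<in> V" for y
    using has_derivative_compose[OF der_g[OF that] has_derivative_pd_matrix[OF holF gU[OF that]]]
    by (simp add: H_def matrix_vector_mul_assoc o_def)
  then show "\<forall>A. holo_on (\<lambda>y. (F \<circ> g) y $ A) V"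
    by (rule holo_on_pd_matrix_if_has_derivative(1))
  fix y assume "y \<in> V"
  have "pd_matrix (F \<circ> g) y = H y"
    using der_Fg \<open>y \<in> V\<close> by (rule holo_on_pd_matrix_if_has_derivative(2))
  then show "transpose (pd_matrix (F \<circ> g) y) = pd_matrix (F \<circ> g) y"
    using symmetric_mult_matrix_inv[OF lagr inv] gU[OF \<open>y \<in> V\<close>] by (simp add: H_def)
qed

lemma local_prepotential:
  fixes X F :: "complex^'n \<Rightarrow> complex^'n"
  assumes "open U" and holX: "\<forall>A. holo_on (\<lambda>z. X z $ A) U" and holF: "\<forall>A. holo_on (\<lambda>z. F z $ A) U"
    and inv: "\<And>z. z \<in> U \<Longrightarrow> invertible (pd_matrix X z)"
    and lagr: "\<And>z. z \<in> U \<Longrightarrow>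
      transpose (pd_matrix X z) ** pd_matrix F z = transpose (pd_matrix F z) ** pd_matrix X z"
    and "z0 \<in> U"
  shows "\<exists>U0 W (Fpot :: complex^'n \<Rightarrow> complex).
    open U0 \<and> z0 \<in> U0 \<and> U0 \<subseteq> U \<and> open W \<and> X ` U0 \<subseteq> W \<and> holo_on Fpot W
    \<and> (\<forall>z\<in>U0. \<forall>A. F z $ A = pd Fpot A (X z))"
proof -
  obtain U' V g where "open U'" "U' \<subseteq> U" "z0 \<in> U'" "open V" "X z0 \<in> V"
    and hom: "homeomorphism U' V X g"
    and der_g: "\<And>y. y \<in> V \<Longrightarrow> (g has_derivative (\<lambda>v. matrix_inv (pd_matrix X (g y)) *v v)) (at y)"
    using holo_inverse_function_theorem[OF \<open>open U\<close> holX \<open>z0 \<in> U\<close> inv[OF \<open>z0 \<in> U\<close>]] by blast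
  have "continuous_on U' X" and gX: "\<And>z. z \<in> U' \<Longrightarrow> g (X z) = z" and "g ` V = U'"
    using hom unfolding homeomorphism_def by blast+
  obtain \<rho> where "\<rho> > 0" and ball: "ball (X z0) \<rho> \<subseteq> V"
    using \<open>open V\<close> \<open>X z0 \<in> V\<close> open_contains_ball by blast
  have gU: "g y \<in> U" if "y \<in> ball (X z0) \<rho>" for y
  proof -
    from that ball have "y \<in> V" by blast
    with \<open>g ` V = U'\<close> \<open>U' \<subseteq> U\<close> show ?thesis by blast
  qed
  have der_g': "(g has_derivative (\<lambda>v. matrix_inv (pd_matrix X (g y)) *v v)) (at y)"
    if "y \<in> ball (X z0) \<rho>" for y
    using that ball by (intro der_g) blast
  have hol_Fg: "\<forall>A. holo_on (\<lambda>y. (F \<circ> g) y $ A) (ball (X z0) \<rho>)"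
    using holF inv lagr gU der_g' by (rule symmetric_pd_matrix_comp_inverse(1))
  have sym_Fg: "transpose (pd_matrix (F \<circ> g) y) = pd_matrix (F \<circ> g) y" if "y \<in> ball (X z0) \<rho>" for y
    using holF inv lagr gU der_g' that by (rule symmetric_pd_matrix_comp_inverse(2))
  obtain \<Phi> where "holo_on \<Phi> (ball (X z0) \<rho>)"
    and pd_\<Phi>: "\<forall>x\<in>ball (X z0) \<rho>. \<forall>A. pd \<Phi> A x = (F \<circ> g) x $ A"
    using exists_holo_potential_convex[OF open_ball convex_ball hol_Fg sym_Fg] by blast
  define U0 where "U0 = U' \<inter> X -` ball (X z0) \<rho>"
  have "open U0"
    unfolding U0_def using \<open>open U'\<close> \<open>continuous_on U' X\<close>
    by (simp add: continuous_on_open_vimage Int_commute)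
  moreover have "\<forall>z\<in>U0. \<forall>A. F z $ A = pd \<Phi> A (X z)"
    using pd_\<Phi> gX by (simp add: U0_def)
  ultimately show ?thesis
    using \<open>z0 \<in> U'\<close> \<open>\<rho> > 0\<close> \<open>U' \<subseteq> U\<close> \<open>holo_on \<Phi> (ball (X z0) \<rho>)\<close>
    by (intro exI[of _ U0] exI[of _ "ball (X z0) \<rho>"] exI[of _ \<Phi>]) (auto simp: U0_def)
qed

theorem mainTheorem2:
  fixes U :: "(complex^'n) set"
    and X F :: "complex^'n \<Rightarrow> complex^'n"
  assumes "open U"
    and "\<forall>A. holo_on (\<lambda>z. X z $ A) U"
    and "\<forall>A. holo_on (\<lambda>z. F z $ A) U"
    and "\<forall>z\<in>U. pos_def_herm (gmet X F z)"
    and "\<forall>z\<in>U. \<forall>a b. symp (dV X F a z) (dV X F b z) = 0"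
  shows "(\<forall>z\<in>U. invertible (\<chi> A a. pd (\<lambda>w. X w $ A) a z))
    \<and> (\<forall>z0\<in>U. \<exists>U0 W (Fpot :: complex^'n \<Rightarrow> complex).
          open U0 \<and> z0 \<in> U0 \<and> U0 \<subseteq> U \<and> open W \<and> X ` U0 \<subseteq> W \<and> holo_on Fpot W
          \<and> (\<forall>z\<in>U0. \<forall>A. F z $ A = pd Fpot A (X z)))"
proof -
  have inv: "invertible (pd_matrix X z)" if "z \<in> U" for z
    using invertible_pd_matrix_if_pos_def assms(4) that by blast
  have "transpose (pd_matrix X z) ** pd_matrix F z = transpose (pd_matrix F z) ** pd_matrix X z"
    if "z \<in> U" for z
    using assms(5) that by (simp add: vec_eq_iff symp_dV_eq)
  with local_prepotential[OF assms(1-3) inv] inv show ?thesis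
    by (simp add: pd_matrix_def)
qed

end
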